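(* Let $u\ge t\ge s\ge 0$ be integers and set $\lambda=(u,t,s,s)$, $\mu=(u+s,t+s)$, $\nu=(u+t,2s)$ (three partitions of $u+t+2s$). Then for every integer $k\ge1$, $$g_{k\mu,k\nu,k\lambda}=1=\tilde g_{k\mu,k\nu,k\lambda}.$$
   Context: For a partition $\alpha$ and integer $k$, $k\alpha$ is obtained by multiplying each part by $k$. The Kronecker coefficient $g_{\mu,\nu,\lambda}$ (for $\ell(\mu),\ell(\nu)\le2$, $\ell(\lambda)\le4$, same weight, parts padded with zeros) is defined by $s_\lambda(x_1y_1,x_1y_2,x_2y_1,x_2y_2)=\sum_{\mu,\nu}g_{\mu,\nu,\lambda}\,s_\mu(x_1,x_2)s_\nu(y_1,y_2)$. For integers $n,m$, $p_S(n,m)$ is the number of $(x_1,\dots,x_4)\in\mathbb{Z}_{\ge0}^4$ with $x_1+x_3+x_4=n$, $x_2+x_3+2x_4=m$ (zero if $n<0$ or $m<0$). The atomic Kronecker coefficient is $\tilde g_{\mu,\nu,\lambda}:=p_S(\nu_2-\lambda_3-\lambda_4,\ \mu_2+\nu_2-\lambda_2-\lambda_3-2\lambda_4)$. *)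

theory Defs
  imports Main Complex_Main
begin

text \<open>Partitions are lists of naturals (padded with zeros to the required length).
  Cells of the Young diagram are pairs (row, column), 0-indexed.\<close>

definition cells :: "nat list \<Rightarrow> (nat \<times> nat) set" where
  "cells la = {(i, j). i < length la \<and> j < la ! i}"

definition SSYT :: "nat list \<Rightarrow> nat \<Rightarrow> (nat \<times> nat \<Rightarrow> nat) set" where
  "SSYT la n = {T. (\<forall>c\<in>cells la. T c < n) \<and> (\<forall>c. c \<notin> cells la \<longrightarrow> T c = 0)
     \<and> (\<forall>i j. (i, j) \<in> cells la \<and> (i, Suc j) \<in> cells la \<longrightarrow> T (i, j) \<le> T (i, Suc j))
     \<and> (\<forall>i j. (i, j) \<in> cells la \<and> (Suc i, j) \<in> cells la \<longrightarrow> T (i, j) < T (Suc i, j))}"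

definition schur :: "nat list \<Rightarrow> real list \<Rightarrow> real" where
  "schur la xs = (\<Sum>T\<in>SSYT la (length xs). \<Prod>c\<in>cells la. xs ! (T c))"

definition parts2 :: "nat \<Rightarrow> nat list set" where
  "parts2 n = {[a, b] | a b. b \<le> a \<and> a + b = n}"

text \<open>Kronecker coefficient g_{mu,nu,la} for la of length 4: the coefficients of the
  expansion s_la(x1y1,x1y2,x2y1,x2y2) = sum g_{mu,nu,la} s_mu(x1,x2) s_nu(y1,y2),
  mu, nu ranging over partitions of |la| with at most two parts (other g are 0).\<close>
definition kron :: "nat list \<Rightarrow> nat list \<Rightarrow> nat list \<Rightarrow> int" where
  "kron mu nu la = (THE g :: nat list \<Rightarrow> nat list \<Rightarrow> int.
      (\<forall>a b. (a, b) \<notin> parts2 (sum_list la) \<times> parts2 (sum_list la) \<longrightarrow> g a b = 0) \<and>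
      (\<forall>x1 x2 y1 y2 :: real.
         schur la [x1*y1, x1*y2, x2*y1, x2*y2] =
         (\<Sum>(a, b)\<in>parts2 (sum_list la) \<times> parts2 (sum_list la).
             of_int (g a b) * schur a [x1, x2] * schur b [y1, y2]))) mu nu"

definition pS :: "int \<Rightarrow> int \<Rightarrow> nat" where
  "pS n m = card {(x1, x2, x3, x4). int x1 + int x3 + int x4 = n \<and> int x2 + int x3 + 2 * int x4 = m}"

definition atomic_kron :: "nat list \<Rightarrow> nat list \<Rightarrow> nat list \<Rightarrow> nat" where
  "atomic_kron mu nu la =
     pS (int (nu!1) - int (la!2) - int (la!3))
        (int (mu!1) + int (nu!1) - int (la!1) - int (la!2) - 2 * int (la!3))"

definition scale :: "nat \<Rightarrow> nat list \<Rightarrow> nat list" where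
  "scale k la = map (\<lambda>p. k * p) la"

end

theory Submission
  imports Defs
begin

text \<open>The shape \<open>L = (L0, L1, L2, L3)\<close> has four rows, so \<open>s_L(x1y1, x1y2, x2y1, x2y2)\<close> is a sum over
  Gelfand--Tsetlin patterns. Let \<open>K(a, c)\<close> count the patterns contributing
  \<open>x1^a x2^(N-a) y1^c y2^(N-c)\<close>. Compositions of Bender--Knuth involutions make \<open>K\<close> palindromic in
  each argument, so Abel summation rewrites the sum in the basis \<open>s_(a, N-a)(x) s_(c, N-c)(y)\<close>
  with the second differences of \<open>K\<close> as coefficients; by linear independence of these products
  the Kronecker coefficient is that second difference. For \<open>L = k(u, t, s, s)\<close> the weight
  \<open>k(u + s, u + t)\<close> is carried by a single pattern and cannot be increased in either coordinate,
  so the second difference is \<open>1\<close>. Both arguments of \<open>p_S\<close> in the atomic coefficient vanish.\<close>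

subsection \<open>Palindromic sums in the two-row Schur basis\<close>

definition first_parts :: "nat \<Rightarrow> nat set" where
  "first_parts N = {a. N \<le> 2 * a \<and> a \<le> N}"

lemma finite_first_parts [simp]: "finite (first_parts N)"
  unfolding first_parts_def by (rule finite_subset[of _ "{..N}"]) auto

lemma parts2_eq_image: "parts2 N = (\<lambda>a. [a, N - a]) ` first_parts N"
  by (auto simp: parts2_def first_parts_def image_def)

definition schur2 :: "nat \<Rightarrow> nat \<Rightarrow> real \<Rightarrow> real \<Rightarrow> real" where
  "schur2 N a x y = (\<Sum>i\<in>{N - a..a}. x ^ i * y ^ (N - i))"

lemma sum_first_parts_swap:
  fixes e X :: "nat \<Rightarrow> real"
  shows "(\<Sum>a\<in>first_parts N. e a * (\<Sum>i\<in>{N - a..a}. X i))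
       = (\<Sum>i\<le>N. X i * (\<Sum>a\<in>{max i (N - i)..N}. e a))"
proof -
  have "(\<Sum>a\<in>first_parts N. e a * (\<Sum>i\<in>{N - a..a}. X i))
      = (\<Sum>a\<in>first_parts N. \<Sum>i\<in>{i. i \<in> {..N} \<and> N - a \<le> i \<and> i \<le> a}. e a * X i)"
    by (rule sum.cong) (auto simp: sum_distrib_left first_parts_def intro!: sum.cong)
  also have "\<dots> = (\<Sum>i\<in>{..N}. \<Sum>a\<in>{a. a \<in> first_parts N \<and> N - a \<le> i \<and> i \<le> a}. e a * X i)"
    by (rule sum.swap_restrict) auto
  also have "\<dots> = (\<Sum>i\<le>N. X i * (\<Sum>a\<in>{max i (N - i)..N}. e a))"
    by (rule sum.cong)
      (auto simp: sum_distrib_left first_parts_def mult.commute intro!: sum.cong)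
  finally show ?thesis .
qed

text \<open>Abel summation: the blocks \<open>\<Sum>i\<in>{N-a..a}. X i\<close> are the two-row Schur polynomials.\<close>
lemma sum_palindromic_telescope:
  fixes h X :: "nat \<Rightarrow> real"
  assumes palindromic: "\<And>i. i \<le> N \<Longrightarrow> h i = h (N - i)" and vanish: "h (Suc N) = 0"
  shows "(\<Sum>i\<le>N. h i * X i)
       = (\<Sum>a\<in>first_parts N. (h a - h (Suc a)) * (\<Sum>i\<in>{N - a..a}. X i))"
proof -
  have "(\<Sum>a\<in>{max i (N - i)..N}. h a - h (Suc a)) = h i" if i: "i \<le> N" for i
  proof -
    have "(\<Sum>a\<in>{max i (N - i)..N}. h a - h (Suc a)) = - (\<Sum>a\<in>{max i (N - i)..N}. h (Suc a) - h a)"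
      by (simp add: sum_negf[symmetric])
    also have "\<dots> = h (max i (N - i))"
      using i by (subst sum_Suc_diff) (auto simp: vanish)
    also have "\<dots> = h i"
      using palindromic[OF i] by (simp add: max_def)
    finally show ?thesis .
  qed
  then show ?thesis
    by (simp add: sum_first_parts_swap mult.commute)
qed

lemma first_parts_sums_independent:
  fixes e :: "nat \<Rightarrow> real"
  assumes "\<And>x::real. (\<Sum>a\<in>first_parts N. e a * (\<Sum>i\<in>{N - a..a}. x ^ i)) = 0"
    and "a \<in> first_parts N"
  shows "e a = 0"
proof -
  define c where "c i = (\<Sum>b\<in>{max i (N - i)..N}. e b)" for i
  have "\<forall>x::real. (\<Sum>i\<le>N. c i * x ^ i) = 0"
    using assms(1) by (simp add: sum_first_parts_swap c_def mult.commute)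
  then have c0: "\<And>i. i \<le> N \<Longrightarrow> c i = 0"
    using polyfun_eq_0 by blast
  have a: "N \<le> 2 * a" "a \<le> N"
    using assms(2) by (auto simp: first_parts_def)
  have "max a (N - a) = a" "a < N \<Longrightarrow> max (Suc a) (N - Suc a) = Suc a"
    using a by auto
  then have "c a = e a + (\<Sum>b\<in>{Suc a..N}. e b)" "a < N \<Longrightarrow> c (Suc a) = (\<Sum>b\<in>{Suc a..N}. e b)"
    using a by (simp_all add: c_def sum.atLeast_Suc_atMost)
  then show "e a = 0"
    using c0 a by (cases "a = N") auto
qed

subsection \<open>Rows of tableaux and two-row Schur polynomials\<close>

lemma cells_two_rows_iff:
  "(i, j) \<in> cells [a, b] \<longleftrightarrow> (i = 0 \<and> j < a) \<or> (i = 1 \<and> j < b)"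
  by (auto simp: cells_def less_Suc_eq nth_Cons split: nat.splits)

lemma cells_two_rows: "cells [a, b] = (\<lambda>j. (0, j)) ` {..<a} \<union> (\<lambda>j. (1, j)) ` {..<b}"
  by (auto simp: cells_two_rows_iff)

lemma monotone_threshold_prefix:
  fixes f :: "nat \<Rightarrow> nat"
  assumes "\<And>j. Suc j < m \<Longrightarrow> f j \<le> f (Suc j)"
  shows "\<exists>c\<le>m. \<forall>j<m. f j \<le> i \<longleftrightarrow> j < c"
  using assms
proof (induction m)
  case 0
  then show ?case by auto
next
  case (Suc m)
  then obtain c where c: "c \<le> m" "\<forall>j<m. f j \<le> i \<longleftrightarrow> j < c"
    by auto
  show ?case
  proof (cases "c = m \<and> f m \<le> i")
    case True
    then show ?thesis
      using c by (intro exI[of _ "Suc m"]) (auto simp: less_Suc_eq)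
  next
    case False
    have "\<not> f m \<le> i" if "c < m"
    proof -
      have "\<not> f (m - 1) \<le> i" "f (m - 1) \<le> f m"
        using c that Suc.prems[of "m - 1"] by auto
      then show ?thesis by simp
    qed
    with False c show ?thesis
      by (intro exI[of _ c]) (auto simp: less_Suc_eq)
  qed
qed

text \<open>In a weakly increasing row the entries \<open>\<le> i\<close> form a prefix, of length \<open>row_level T m i r\<close>.\<close>
definition row_level :: "(nat \<times> nat \<Rightarrow> nat) \<Rightarrow> nat \<Rightarrow> nat \<Rightarrow> nat \<Rightarrow> nat" where
  "row_level T m i r = card {j. j < m \<and> T (r, j) \<le> i}"

lemma card_threshold_prefix:
  assumes "c \<le> m" "\<forall>j<m. f j \<le> i \<longleftrightarrow> j < c"
  shows "card {j. j < m \<and> f j \<le> i} = c"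
proof -
  have "{j. j < m \<and> f j \<le> i} = {..<c}"
    using assms by auto
  then show ?thesis by simp
qed

lemma row_level_threshold:
  assumes "\<And>j. Suc j < m \<Longrightarrow> T (r, j) \<le> T (r, Suc j)"
  shows "row_level T m i r \<le> m \<and> (\<forall>j<m. T (r, j) \<le> i \<longleftrightarrow> j < row_level T m i r)"
proof -
  obtain c where c: "c \<le> m" "\<forall>j<m. T (r, j) \<le> i \<longleftrightarrow> j < c"
    using monotone_threshold_prefix[of m "\<lambda>j. T (r, j)" i] assms by auto
  then have "row_level T m i r = c"
    unfolding row_level_def by (rule card_threshold_prefix)
  with c show ?thesis by simp
qed

definition two_row_tableau :: "nat \<Rightarrow> nat \<Rightarrow> nat \<Rightarrow> nat \<times> nat \<Rightarrow> nat" where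
  "two_row_tableau a b p = (\<lambda>(r, j).
     if r = 0 \<and> j < a then (if j < p then 0 else 1) else if r = 1 \<and> j < b then 1 else 0)"

lemma two_row_tableau_SSYT:
  "b \<le> p \<Longrightarrow> p \<le> a \<Longrightarrow> two_row_tableau a b p \<in> SSYT [a, b] 2"
  unfolding SSYT_def by (auto simp: cells_two_rows_iff two_row_tableau_def)

lemma SSYT_two_rows_obtain:
  assumes T: "T \<in> SSYT [a, b] 2" and "b \<le> a"
  obtains p where "b \<le> p" "p \<le> a" "T = two_row_tableau a b p"
proof -
  have lt: "\<And>c. c \<in> cells [a, b] \<Longrightarrow> T c < 2"
    and out: "\<And>c. c \<notin> cells [a, b] \<Longrightarrow> T c = 0"
    and row: "\<And>i j. (i, j) \<in> cells [a, b] \<Longrightarrow> (i, Suc j) \<in> cells [a, b] \<Longrightarrow> T (i, j) \<le> T (i, Suc j)"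
    and col: "\<And>i j. (i, j) \<in> cells [a, b] \<Longrightarrow> (Suc i, j) \<in> cells [a, b] \<Longrightarrow> T (i, j) < T (Suc i, j)"
    using T unfolding SSYT_def by blast+
  define p where "p = row_level T a 0 0"
  have p: "p \<le> a" "\<forall>j<a. T (0, j) = 0 \<longleftrightarrow> j < p"
    using row_level_threshold[of a T 0 0] row unfolding p_def by (auto simp: cells_two_rows_iff)
  have below: "T (1, j) = 1 \<and> T (0, j) = 0" if "j < b" for j
    using col[of 0 j] lt[of "(1, j)"] that \<open>b \<le> a\<close> by (auto simp: cells_two_rows_iff)
  have "b \<le> p"
  proof (rule ccontr)
    assume "\<not> b \<le> p"
    then have "T (0, p) = 0" "p < a"
      using below \<open>b \<le> a\<close> by auto
    then show False
      using p by auto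
  qed
  moreover have "T = two_row_tableau a b p"
  proof
    fix c :: "nat \<times> nat"
    obtain r j where c: "c = (r, j)"
      by (cases c)
    show "T c = two_row_tableau a b p c"
    proof (cases "(r, j) \<in> cells [a, b]")
      case False
      then show ?thesis
        using out c by (auto simp: two_row_tableau_def cells_two_rows_iff)
    next
      case True
      then have "T (r, j) < 2"
        using lt by auto
      then show ?thesis
        using True c below p by (auto simp: two_row_tableau_def cells_two_rows_iff)
    qed
  qed
  ultimately show thesis
    using p that by blast
qed

lemma inj_on_two_row_tableau: "inj_on (two_row_tableau a b) {b..a}"
proof (rule inj_onI)
  fix p q
  assume "p \<in> {b..a}" "q \<in> {b..a}" and eq: "two_row_tableau a b p = two_row_tableau a b q"
  have "two_row_tableau a b p (0, min p q) = two_row_tableau a b q (0, min p q)"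
    using eq by simp
  with \<open>p \<in> {b..a}\<close> \<open>q \<in> {b..a}\<close> show "p = q"
    by (auto simp: two_row_tableau_def min_def split: if_splits)
qed

lemma two_row_tableau_monomial:
  assumes "b \<le> p" "p \<le> a"
  shows "(\<Prod>c\<in>cells [a, b]. [x, y] ! two_row_tableau a b p c) = x ^ p * y ^ (a + b - p)"
proof -
  have "(\<Prod>c\<in>cells [a, b]. [x, y] ! two_row_tableau a b p c)
      = (\<Prod>j<a. [x, y] ! two_row_tableau a b p (0, j)) * (\<Prod>j<b. [x, y] ! two_row_tableau a b p (1, j))"
    unfolding cells_two_rows
    by (subst prod.union_disjoint) (auto simp: prod.reindex inj_on_def)
  also have "(\<Prod>j<b. [x, y] ! two_row_tableau a b p (1, j)) = y ^ b"
    by (simp add: two_row_tableau_def)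
  also have "(\<Prod>j<a. [x, y] ! two_row_tableau a b p (0, j))
      = (\<Prod>j<p. [x, y] ! two_row_tableau a b p (0, j)) * (\<Prod>j\<in>{p..<a}. [x, y] ! two_row_tableau a b p (0, j))"
    using assms by (metis atLeast0LessThan prod.atLeastLessThan_concat zero_le)
  also have "\<dots> = x ^ p * y ^ (a - p)"
    using assms by (simp add: two_row_tableau_def)
  finally show ?thesis
    using assms by (simp add: mult.assoc power_add[symmetric])
qed

lemma schur_two_rows:
  assumes "b \<le> a"
  shows "schur [a, b] [x, y] = (\<Sum>p\<in>{b..a}. x ^ p * y ^ (a + b - p))"
proof -
  have bij: "bij_betw (two_row_tableau a b) {b..a} (SSYT [a, b] 2)"
    unfolding bij_betw_def using inj_on_two_row_tableau two_row_tableau_SSYT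
    by (auto elim!: SSYT_two_rows_obtain[OF _ assms])
  have "schur [a, b] [x, y] = (\<Sum>T\<in>SSYT [a, b] 2. \<Prod>c\<in>cells [a, b]. [x, y] ! T c)"
    by (simp add: schur_def numeral_2_eq_2)
  also have "\<dots> = (\<Sum>p\<in>{b..a}. \<Prod>c\<in>cells [a, b]. [x, y] ! two_row_tableau a b p c)"
    by (rule sum.reindex_bij_betw[OF bij, symmetric])
  also have "\<dots> = (\<Sum>p\<in>{b..a}. x ^ p * y ^ (a + b - p))"
    by (rule sum.cong) (auto simp: two_row_tableau_monomial)
  finally show ?thesis .
qed

lemma schur_two_rows_eq_schur2: "a \<in> first_parts N \<Longrightarrow> schur [a, N - a] [x, y] = schur2 N a x y"
  by (subst schur_two_rows) (auto simp: first_parts_def schur2_def)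

subsection \<open>Uniqueness of the Kronecker expansion\<close>

lemma sum_parts2_schur_products:
  fixes E :: "nat list \<Rightarrow> nat list \<Rightarrow> real"
  shows "(\<Sum>(A, B)\<in>parts2 N \<times> parts2 N. E A B * schur A [x1, x2] * schur B [y1, y2])
       = (\<Sum>a\<in>first_parts N. \<Sum>c\<in>first_parts N.
            E [a, N - a] [c, N - c] * schur2 N a x1 x2 * schur2 N c y1 y2)"
proof -
  have inj: "inj_on (\<lambda>a. [a, N - a]) A" for A
    by (auto simp: inj_on_def)
  have "(\<Sum>(A, B)\<in>parts2 N \<times> parts2 N. E A B * schur A [x1, x2] * schur B [y1, y2])
      = (\<Sum>A\<in>parts2 N. \<Sum>B\<in>parts2 N. E A B * schur A [x1, x2] * schur B [y1, y2])"
    by (rule sum.cartesian_product[symmetric])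
  also have "\<dots> = (\<Sum>a\<in>first_parts N. \<Sum>c\<in>first_parts N.
      E [a, N - a] [c, N - c] * schur [a, N - a] [x1, x2] * schur [c, N - c] [y1, y2])"
    unfolding parts2_eq_image by (simp add: sum.reindex[OF inj])
  also have "\<dots> = (\<Sum>a\<in>first_parts N. \<Sum>c\<in>first_parts N.
      E [a, N - a] [c, N - c] * schur2 N a x1 x2 * schur2 N c y1 y2)"
    by (intro sum.cong refl) (simp add: schur_two_rows_eq_schur2)
  finally show ?thesis .
qed

lemma schur2_products_independent:
  fixes e :: "nat \<Rightarrow> nat \<Rightarrow> real"
  assumes zero: "\<And>x1 x2 y1 y2. (\<Sum>a\<in>first_parts N. \<Sum>c\<in>first_parts N.
                    e a c * schur2 N a x1 x2 * schur2 N c y1 y2) = 0"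
    and "a \<in> first_parts N" "c \<in> first_parts N"
  shows "e a c = 0"
proof -
  have schur2_1: "schur2 N a x 1 = (\<Sum>i\<in>{N - a..a}. x ^ i)" for a x
    by (simp add: schur2_def)
  have "(\<Sum>c\<in>first_parts N. e a c * schur2 N c y 1) = 0" for y
  proof (rule first_parts_sums_independent[OF _ \<open>a \<in> first_parts N\<close>])
    fix x :: real
    have "(\<Sum>a\<in>first_parts N. (\<Sum>c\<in>first_parts N. e a c * schur2 N c y 1) * schur2 N a x 1)
        = (\<Sum>a\<in>first_parts N. \<Sum>c\<in>first_parts N. e a c * schur2 N a x 1 * schur2 N c y 1)"
      by (simp only: sum_distrib_right) (intro sum.cong refl; simp only: ac_simps)
    also have "\<dots> = 0"
      by (rule zero)
    finally show "(\<Sum>a\<in>first_parts N. (\<Sum>c\<in>first_parts N. e a c * schur2 N c y 1) * (\<Sum>i\<in>{N - a..a}. x ^ i)) = 0"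
      by (simp only: schur2_1)
  qed
  then show ?thesis
    using first_parts_sums_independent[OF _ \<open>c \<in> first_parts N\<close>] by (simp add: schur2_1)
qed

definition kron_expansion :: "nat list \<Rightarrow> (nat list \<Rightarrow> nat list \<Rightarrow> int) \<Rightarrow> bool" where
  "kron_expansion la g \<longleftrightarrow>
     (\<forall>a b. (a, b) \<notin> parts2 (sum_list la) \<times> parts2 (sum_list la) \<longrightarrow> g a b = 0) \<and>
     (\<forall>x1 x2 y1 y2 :: real.
        schur la [x1*y1, x1*y2, x2*y1, x2*y2] =
        (\<Sum>(a, b)\<in>parts2 (sum_list la) \<times> parts2 (sum_list la).
            of_int (g a b) * schur a [x1, x2] * schur b [y1, y2]))"

lemma kron_eq_The: "kron mu nu la = (THE g. kron_expansion la g) mu nu"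
  by (simp add: kron_def kron_expansion_def)

lemma kron_expansion_unique:
  assumes g: "kron_expansion la g" and h: "kron_expansion la h"
  shows "g = h"
proof (intro ext)
  fix A B
  define N where "N = sum_list la"
  define e where "e a c = real_of_int (g [a, N - a] [c, N - c] - h [a, N - a] [c, N - c])" for a c
  have "(\<Sum>a\<in>first_parts N. \<Sum>c\<in>first_parts N. e a c * schur2 N a x1 x2 * schur2 N c y1 y2) = 0"
    for x1 x2 y1 y2
  proof -
    have "(\<Sum>a\<in>first_parts N. \<Sum>c\<in>first_parts N. e a c * schur2 N a x1 x2 * schur2 N c y1 y2)
        = (\<Sum>(A, B)\<in>parts2 N \<times> parts2 N. of_int (g A B - h A B) * schur A [x1, x2] * schur B [y1, y2])"
      by (simp add: sum_parts2_schur_products e_def)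
    also have "\<dots> = (\<Sum>(A, B)\<in>parts2 N \<times> parts2 N. of_int (g A B) * schur A [x1, x2] * schur B [y1, y2])
        - (\<Sum>(A, B)\<in>parts2 N \<times> parts2 N. of_int (h A B) * schur A [x1, x2] * schur B [y1, y2])"
      by (simp add: sum_subtractf[symmetric] case_prod_beta algebra_simps)
    also have "\<dots> = 0"
      using g h by (simp add: kron_expansion_def N_def)
    finally show ?thesis .
  qed
  then have "e a c = 0" if "a \<in> first_parts N" "c \<in> first_parts N" for a c
    using schur2_products_independent that by blast
  show "g A B = h A B"
  proof (cases "(A, B) \<in> parts2 N \<times> parts2 N")
    case True
    then obtain a c where "a \<in> first_parts N" "c \<in> first_parts N" "A = [a, N - a]" "B = [c, N - c]"
      unfolding parts2_eq_image by blast
    with \<open>\<And>a c. a \<in> first_parts N \<Longrightarrow> c \<in> first_parts N \<Longrightarrow> e a c = 0\<close> show ?thesis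
      by (auto simp: e_def)
  next
    case False
    then show ?thesis
      using g h by (simp add: kron_expansion_def N_def)
  qed
qed

subsection \<open>Four-row tableaux and Gelfand--Tsetlin patterns\<close>

text \<open>A semistandard tableau of shape \<open>[L0, L1, L2, L3]\<close> with entries \<open>< 4\<close> is determined by the
  lengths \<open>(p, q0, q1, r0, r1, r2)\<close> of the prefixes of entries \<open>\<le> 0\<close>, \<open>\<le> 1\<close>, \<open>\<le> 2\<close> in its
  rows (rows \<open>1\<close>, \<open>2\<close>, \<open>3\<close> start with entries \<open>\<ge> 1\<close>, \<open>\<ge> 2\<close>, \<open>3\<close>); semistandardness amounts
  to the interlacing inequalities of the Gelfand--Tsetlin pattern
  \<open>L \<succeq> (r0, r1, r2) \<succeq> (q0, q1) \<succeq> p\<close>.\<close>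
type_synonym gt_pattern = "nat \<times> nat \<times> nat \<times> nat \<times> nat \<times> nat"

definition gt_patterns :: "nat \<Rightarrow> nat \<Rightarrow> nat \<Rightarrow> nat \<Rightarrow> gt_pattern set" where
  "gt_patterns L0 L1 L2 L3 = {(p, q0, q1, r0, r1, r2).
     L1 \<le> r0 \<and> r0 \<le> L0 \<and> L2 \<le> r1 \<and> r1 \<le> L1 \<and> L3 \<le> r2 \<and> r2 \<le> L2 \<and>
     r1 \<le> q0 \<and> q0 \<le> r0 \<and> r2 \<le> q1 \<and> q1 \<le> r1 \<and> q1 \<le> p \<and> p \<le> q0}"

definition row_filling :: "nat \<Rightarrow> nat \<Rightarrow> nat \<Rightarrow> nat \<Rightarrow> nat" where
  "row_filling a b c j = (if j < a then 0 else if j < b then 1 else if j < c then 2 else 3)"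

definition gt_tableau :: "nat \<Rightarrow> nat \<Rightarrow> nat \<Rightarrow> nat \<Rightarrow> gt_pattern \<Rightarrow> nat \<times> nat \<Rightarrow> nat" where
  "gt_tableau L0 L1 L2 L3 P = (case P of (p, q0, q1, r0, r1, r2) \<Rightarrow> (\<lambda>(r, j).
     if r = 0 \<and> j < L0 then row_filling p q0 r0 j
     else if r = 1 \<and> j < L1 then row_filling 0 q1 r1 j
     else if r = 2 \<and> j < L2 then row_filling 0 0 r2 j
     else if r = 3 \<and> j < L3 then 3 else 0))"

definition gt_of_tableau :: "nat \<Rightarrow> nat \<Rightarrow> nat \<Rightarrow> (nat \<times> nat \<Rightarrow> nat) \<Rightarrow> gt_pattern" where
  "gt_of_tableau L0 L1 L2 T =
     (row_level T L0 0 0, row_level T L0 1 0, row_level T L1 1 1,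
      row_level T L0 2 0, row_level T L1 2 1, row_level T L2 2 2)"

lemma finite_gt_patterns: "finite (gt_patterns L0 L1 L2 L3)"
proof -
  have "gt_patterns L0 L1 L2 L3 \<subseteq> {..L0} \<times> {..L0} \<times> {..L0} \<times> {..L0} \<times> {..L0} \<times> {..L0}"
    by (auto simp: gt_patterns_def)
  then show ?thesis
    by (rule finite_subset) auto
qed

lemma cells_four_rows_iff:
  "(i, j) \<in> cells [L0, L1, L2, L3] \<longleftrightarrow>
     (i = 0 \<and> j < L0) \<or> (i = 1 \<and> j < L1) \<or> (i = 2 \<and> j < L2) \<or> (i = 3 \<and> j < L3)"
  by (auto simp: cells_def less_Suc_eq nth_Cons numeral_eq_Suc split: nat.splits)

lemma gt_tableau_SSYT:
  assumes "P \<in> gt_patterns L0 L1 L2 L3" "L3 \<le> L2" "L2 \<le> L1" "L1 \<le> L0"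
  shows "gt_tableau L0 L1 L2 L3 P \<in> SSYT [L0, L1, L2, L3] 4"
  using assms unfolding SSYT_def gt_patterns_def
  by (auto simp: cells_four_rows_iff gt_tableau_def row_filling_def split: prod.splits)

lemma gt_of_gt_tableau:
  assumes "P \<in> gt_patterns L0 L1 L2 L3"
  shows "gt_of_tableau L0 L1 L2 (gt_tableau L0 L1 L2 L3 P) = P"
proof -
  obtain p q0 q1 r0 r1 r2 where P: "P = (p, q0, q1, r0, r1, r2)"
    by (cases P) auto
  have c: "L1 \<le> r0" "r0 \<le> L0" "L2 \<le> r1" "r1 \<le> L1" "L3 \<le> r2" "r2 \<le> L2"
      "r1 \<le> q0" "q0 \<le> r0" "r2 \<le> q1" "q1 \<le> r1" "q1 \<le> p" "p \<le> q0"
    using assms by (auto simp: gt_patterns_def P)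
  let ?T = "gt_tableau L0 L1 L2 L3 P"
  have level: "row_level ?T m i r = x"
    if "x \<le> m" "\<forall>j<m. ?T (r, j) \<le> i \<longleftrightarrow> j < x" for m i r x
    unfolding row_level_def using that by (rule card_threshold_prefix)
  have "row_level ?T L0 0 0 = p" "row_level ?T L0 1 0 = q0" "row_level ?T L1 1 1 = q1"
    "row_level ?T L0 2 0 = r0" "row_level ?T L1 2 1 = r1" "row_level ?T L2 2 2 = r2"
    by (rule level; use c in \<open>auto simp: P gt_tableau_def row_filling_def\<close>)+
  then show ?thesis
    by (simp add: gt_of_tableau_def P)
qed

lemma le_if_all_less: "(\<And>j. j < m \<Longrightarrow> j < c) \<Longrightarrow> m \<le> (c::nat)"
  using not_less by blast

context
  fixes L0 L1 L2 L3 :: nat and T :: "nat \<times> nat \<Rightarrow> nat"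
  assumes shape: "L3 \<le> L2" "L2 \<le> L1" "L1 \<le> L0"
    and T: "T \<in> SSYT [L0, L1, L2, L3] 4"
begin

lemma SSYT4_column_strict:
  "j < L1 \<Longrightarrow> T (0, j) < T (1, j)" "j < L2 \<Longrightarrow> T (1, j) < T (2, j)"
  "j < L3 \<Longrightarrow> T (2, j) < T (3, j)"
  using T shape unfolding SSYT_def
  by (auto simp: cells_four_rows_iff numeral_eq_Suc dest!: spec[of _ 0] spec[of _ 1] spec[of _ 2])

lemma SSYT4_entry_bounds:
  "j < L0 \<Longrightarrow> T (0, j) < 4" "j < L1 \<Longrightarrow> 1 \<le> T (1, j) \<and> T (1, j) < 4"
  "j < L2 \<Longrightarrow> 2 \<le> T (2, j) \<and> T (2, j) < 4" "j < L3 \<Longrightarrow> T (3, j) = 3"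
proof -
  have lt: "\<And>r j. (r, j) \<in> cells [L0, L1, L2, L3] \<Longrightarrow> T (r, j) < 4"
    using T unfolding SSYT_def by blast
  show "j < L0 \<Longrightarrow> T (0, j) < 4"
    by (rule lt) (simp add: cells_four_rows_iff)
  show 1: "1 \<le> T (1, j) \<and> T (1, j) < 4" if "j < L1" for j
    using SSYT4_column_strict(1)[OF that] lt[of 1 j] that by (simp add: cells_four_rows_iff)
  show 2: "2 \<le> T (2, j) \<and> T (2, j) < 4" if "j < L2" for j
    using SSYT4_column_strict(2)[OF that] 1[of j] lt[of 2 j] that shape by (simp add: cells_four_rows_iff)
  show "T (3, j) = 3" if "j < L3"
    using SSYT4_column_strict(3)[OF that] 2[of j] lt[of 3 j] that shape by (simp add: cells_four_rows_iff)
qed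

lemma SSYT4_row_level:
  "row_level T L0 i 0 \<le> L0" "row_level T L1 i 1 \<le> L1" "row_level T L2 i 2 \<le> L2"
  "j < L0 \<Longrightarrow> T (0, j) \<le> i \<longleftrightarrow> j < row_level T L0 i 0"
  "j < L1 \<Longrightarrow> T (1, j) \<le> i \<longleftrightarrow> j < row_level T L1 i 1"
  "j < L2 \<Longrightarrow> T (2, j) \<le> i \<longleftrightarrow> j < row_level T L2 i 2"
proof -
  have "row_level T m i r \<le> m \<and> (\<forall>j<m. T (r, j) \<le> i \<longleftrightarrow> j < row_level T m i r)"
    if "r < 4" "m = [L0, L1, L2, L3] ! r" for r m
  proof (rule row_level_threshold)
    fix j
    assume "Suc j < m"
    then have "(r, j) \<in> cells [L0, L1, L2, L3]" "(r, Suc j) \<in> cells [L0, L1, L2, L3]"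
      using that by (auto simp: cells_def)
    then show "T (r, j) \<le> T (r, Suc j)"
      using T unfolding SSYT_def by blast
  qed
  from this[of 0 L0] this[of 1 L1] this[of 2 L2] show
    "row_level T L0 i 0 \<le> L0" "row_level T L1 i 1 \<le> L1" "row_level T L2 i 2 \<le> L2"
    "j < L0 \<Longrightarrow> T (0, j) \<le> i \<longleftrightarrow> j < row_level T L0 i 0"
    "j < L1 \<Longrightarrow> T (1, j) \<le> i \<longleftrightarrow> j < row_level T L1 i 1"
    "j < L2 \<Longrightarrow> T (2, j) \<le> i \<longleftrightarrow> j < row_level T L2 i 2"
    by simp_all
qed

lemma gt_of_tableau_lower_bounds:
  "L1 \<le> row_level T L0 2 0"
  "L2 \<le> row_level T L1 2 1"
  "L3 \<le> row_level T L2 2 2"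
proof -
  note lv = SSYT4_row_level and col = SSYT4_column_strict and bd = SSYT4_entry_bounds
  show "L1 \<le> row_level T L0 2 0"
  proof (rule le_if_all_less)
    fix j assume "j < L1"
    then show "j < row_level T L0 2 0"
      using col(1)[of j] bd(2)[of j] lv(4)[of j 2] shape by auto
  qed
  show "L2 \<le> row_level T L1 2 1"
  proof (rule le_if_all_less)
    fix j assume "j < L2"
    then show "j < row_level T L1 2 1"
      using col(2)[of j] bd(3)[of j] lv(5)[of j 2] shape by auto
  qed
  show "L3 \<le> row_level T L2 2 2"
  proof (rule le_if_all_less)
    fix j assume "j < L3"
    then show "j < row_level T L2 2 2"
      using col(3)[of j] bd(4)[of j] lv(6)[of j 2] shape by auto
  qed
qed

lemma gt_of_tableau_interlacing:
  "row_level T L1 2 1 \<le> row_level T L0 1 0"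
  "row_level T L0 1 0 \<le> row_level T L0 2 0"
  "row_level T L2 2 2 \<le> row_level T L1 1 1"
  "row_level T L1 1 1 \<le> row_level T L1 2 1"
  "row_level T L1 1 1 \<le> row_level T L0 0 0"
  "row_level T L0 0 0 \<le> row_level T L0 1 0"
proof -
  note lv = SSYT4_row_level and col = SSYT4_column_strict
  show "row_level T L1 2 1 \<le> row_level T L0 1 0"
  proof (rule le_if_all_less)
    fix j assume "j < row_level T L1 2 1"
    then show "j < row_level T L0 1 0"
      using lv(2)[of 2] lv(5)[of j 2] col(1)[of j] lv(4)[of j 1] shape by auto
  qed
  show "row_level T L0 1 0 \<le> row_level T L0 2 0"
  proof (rule le_if_all_less)
    fix j assume "j < row_level T L0 1 0"
    then show "j < row_level T L0 2 0"
      using lv(1)[of 1] lv(4)[of j 1] lv(4)[of j 2] by auto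
  qed
  show "row_level T L2 2 2 \<le> row_level T L1 1 1"
  proof (rule le_if_all_less)
    fix j assume "j < row_level T L2 2 2"
    then show "j < row_level T L1 1 1"
      using lv(3)[of 2] lv(6)[of j 2] col(2)[of j] lv(5)[of j 1] shape by auto
  qed
  show "row_level T L1 1 1 \<le> row_level T L1 2 1"
  proof (rule le_if_all_less)
    fix j assume "j < row_level T L1 1 1"
    then show "j < row_level T L1 2 1"
      using lv(2)[of 1] lv(5)[of j 1] lv(5)[of j 2] by auto
  qed
  show "row_level T L1 1 1 \<le> row_level T L0 0 0"
  proof (rule le_if_all_less)
    fix j assume "j < row_level T L1 1 1"
    then show "j < row_level T L0 0 0"
      using lv(2)[of 1] lv(5)[of j 1] col(1)[of j] lv(4)[of j 0] shape by auto
  qed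
  show "row_level T L0 0 0 \<le> row_level T L0 1 0"
  proof (rule le_if_all_less)
    fix j assume "j < row_level T L0 0 0"
    then show "j < row_level T L0 1 0"
      using lv(1)[of 0] lv(4)[of j 0] lv(4)[of j 1] by auto
  qed
qed

lemma gt_of_tableau_mem: "gt_of_tableau L0 L1 L2 T \<in> gt_patterns L0 L1 L2 L3"
  using gt_of_tableau_lower_bounds gt_of_tableau_interlacing SSYT4_row_level(1-3)
  by (simp add: gt_of_tableau_def gt_patterns_def)

lemma gt_tableau_gt_of_tableau: "gt_tableau L0 L1 L2 L3 (gt_of_tableau L0 L1 L2 T) = T"
proof
  fix c :: "nat \<times> nat"
  obtain r j where c: "c = (r, j)"
    by (cases c)
  note bd = SSYT4_entry_bounds and lv = SSYT4_row_level
  show "gt_tableau L0 L1 L2 L3 (gt_of_tableau L0 L1 L2 T) c = T c"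
  proof (cases "(r, j) \<in> cells [L0, L1, L2, L3]")
    case False
    then show ?thesis
      using T c by (auto simp: SSYT_def gt_tableau_def gt_of_tableau_def cells_four_rows_iff)
  next
    case True
    then consider "r = 0" "j < L0" | "r = 1" "j < L1" | "r = 2" "j < L2" | "r = 3" "j < L3"
      by (auto simp: cells_four_rows_iff)
    then show ?thesis
    proof cases
      case 1
      then show ?thesis
        using c bd(1)[of j] lv(4)[of j 0] lv(4)[of j 1] lv(4)[of j 2]
        by (auto simp: gt_tableau_def gt_of_tableau_def row_filling_def)
    next
      case 2
      then show ?thesis
        using c bd(2)[of j] lv(5)[of j 1] lv(5)[of j 2] shape
        by (auto simp: gt_tableau_def gt_of_tableau_def row_filling_def)
    next
      case 3
      then show ?thesis
        using c bd(3)[of j] lv(6)[of j 2] shape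
        by (auto simp: gt_tableau_def gt_of_tableau_def row_filling_def)
    next
      case 4
      then show ?thesis
        using c bd(4)[of j] by (auto simp: gt_tableau_def gt_of_tableau_def)
    qed
  qed
qed

end

lemma row_filling_prod:
  fixes z :: "real list"
  assumes "a \<le> b" "b \<le> c" "c \<le> m"
  shows "(\<Prod>j<m. z ! row_filling a b c j) = z!0 ^ a * z!1 ^ (b - a) * z!2 ^ (c - b) * z!3 ^ (m - c)"
proof -
  have split: "(\<Prod>j\<in>{x..<m}. z ! row_filling a b c j)
      = (\<Prod>j\<in>{x..<y}. z ! row_filling a b c j) * (\<Prod>j\<in>{y..<m}. z ! row_filling a b c j)"
    if "x \<le> y" "y \<le> m" for x y
    using that by (simp add: prod.atLeastLessThan_concat)
  have "(\<Prod>j<m. z ! row_filling a b c j) = (\<Prod>j\<in>{0..<m}. z ! row_filling a b c j)"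
    by (simp add: atLeast0LessThan)
  also have "\<dots> = (\<Prod>j\<in>{0..<a}. z ! row_filling a b c j) * (\<Prod>j\<in>{a..<b}. z ! row_filling a b c j)
      * (\<Prod>j\<in>{b..<c}. z ! row_filling a b c j) * (\<Prod>j\<in>{c..<m}. z ! row_filling a b c j)"
    using assms by (simp add: split[of 0 a] split[of a b] split[of b c] mult.assoc)
  also have "\<dots> = z!0 ^ a * z!1 ^ (b - a) * z!2 ^ (c - b) * z!3 ^ (m - c)"
    using assms by (simp add: row_filling_def)
  finally show ?thesis .
qed

definition gt_monomial :: "nat \<Rightarrow> nat \<Rightarrow> nat \<Rightarrow> nat \<Rightarrow> gt_pattern \<Rightarrow> real list \<Rightarrow> real" where
  "gt_monomial L0 L1 L2 L3 P z = (case P of (p, q0, q1, r0, r1, r2) \<Rightarrow>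
      z!0 ^ p * z!1 ^ (q0 - p + q1) * z!2 ^ (r0 - q0 + r1 - q1 + r2)
      * z!3 ^ (L0 - r0 + L1 - r1 + L2 - r2 + L3))"

lemma gt_tableau_monomial:
  assumes P: "P \<in> gt_patterns L0 L1 L2 L3"
  shows "(\<Prod>c\<in>cells [L0, L1, L2, L3]. z ! gt_tableau L0 L1 L2 L3 P c) = gt_monomial L0 L1 L2 L3 P z"
proof -
  obtain p q0 q1 r0 r1 r2 where P_eq: "P = (p, q0, q1, r0, r1, r2)"
    by (cases P) auto
  have c: "L1 \<le> r0" "r0 \<le> L0" "L2 \<le> r1" "r1 \<le> L1" "L3 \<le> r2" "r2 \<le> L2"
      "r1 \<le> q0" "q0 \<le> r0" "r2 \<le> q1" "q1 \<le> r1" "q1 \<le> p" "p \<le> q0"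
    using P by (auto simp: gt_patterns_def P_eq)
  let ?T = "gt_tableau L0 L1 L2 L3 P"
  have cells: "cells [L0, L1, L2, L3] = (SIGMA r:{..<4}. {..<[L0, L1, L2, L3] ! r})"
    by (auto simp: cells_def)
  have "(\<Prod>c\<in>cells [L0, L1, L2, L3]. z ! ?T c) = (\<Prod>r<4. \<Prod>j<[L0, L1, L2, L3] ! r. z ! ?T (r, j))"
    unfolding cells by (subst prod.Sigma) auto
  also have "\<dots> = (\<Prod>j<L0. z ! ?T (0, j)) * (\<Prod>j<L1. z ! ?T (1, j)) * (\<Prod>j<L2. z ! ?T (2, j))
      * (\<Prod>j<L3. z ! ?T (3, j))"
    by (simp add: eval_nat_numeral prod.lessThan_Suc)
  also have "(\<Prod>j<L0. z ! ?T (0, j)) = (\<Prod>j<L0. z ! row_filling p q0 r0 j)"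
    by (rule prod.cong) (auto simp: gt_tableau_def P_eq)
  also have "(\<Prod>j<L1. z ! ?T (1, j)) = (\<Prod>j<L1. z ! row_filling 0 q1 r1 j)"
    by (rule prod.cong) (auto simp: gt_tableau_def P_eq)
  also have "(\<Prod>j<L2. z ! ?T (2, j)) = (\<Prod>j<L2. z ! row_filling 0 0 r2 j)"
    by (rule prod.cong) (auto simp: gt_tableau_def P_eq)
  also have "(\<Prod>j<L3. z ! ?T (3, j)) = (\<Prod>j<L3. z ! row_filling 0 0 0 j)"
    by (rule prod.cong) (auto simp: gt_tableau_def P_eq row_filling_def)
  also have "(\<Prod>j<L0. z ! row_filling p q0 r0 j) * (\<Prod>j<L1. z ! row_filling 0 q1 r1 j)
      * (\<Prod>j<L2. z ! row_filling 0 0 r2 j) * (\<Prod>j<L3. z ! row_filling 0 0 0 j)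
      = (z!0 ^ p * z!1 ^ (q0 - p) * z!2 ^ (r0 - q0) * z!3 ^ (L0 - r0))
      * (z!1 ^ q1 * z!2 ^ (r1 - q1) * z!3 ^ (L1 - r1)) * (z!2 ^ r2 * z!3 ^ (L2 - r2)) * z!3 ^ L3"
    using c by (simp add: row_filling_prod)
  also have "\<dots> = gt_monomial L0 L1 L2 L3 P z"
  proof -
    have "q0 - p + q1 = (q0 - p) + q1" "r0 - q0 + r1 - q1 + r2 = (r0 - q0) + (r1 - q1) + r2"
      "L0 - r0 + L1 - r1 + L2 - r2 + L3 = (L0 - r0) + (L1 - r1) + (L2 - r2) + L3"
      using c by linarith+
    then show ?thesis
      unfolding gt_monomial_def P_eq by (simp add: power_add ac_simps)
  qed
  finally show ?thesis .
qed

lemma schur_four_rows: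
  assumes "L3 \<le> L2" "L2 \<le> L1" "L1 \<le> L0" and "length z = 4"
  shows "schur [L0, L1, L2, L3] z = (\<Sum>P\<in>gt_patterns L0 L1 L2 L3. gt_monomial L0 L1 L2 L3 P z)"
proof -
  have bij: "bij_betw (gt_tableau L0 L1 L2 L3) (gt_patterns L0 L1 L2 L3) (SSYT [L0, L1, L2, L3] 4)"
  proof (rule bij_betw_byWitness[where f' = "gt_of_tableau L0 L1 L2"])
    show "\<forall>P\<in>gt_patterns L0 L1 L2 L3. gt_of_tableau L0 L1 L2 (gt_tableau L0 L1 L2 L3 P) = P"
      using gt_of_gt_tableau by blast
    show "\<forall>T\<in>SSYT [L0, L1, L2, L3] 4. gt_tableau L0 L1 L2 L3 (gt_of_tableau L0 L1 L2 T) = T"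
      using gt_tableau_gt_of_tableau assms(1-3) by blast
    show "gt_tableau L0 L1 L2 L3 ` gt_patterns L0 L1 L2 L3 \<subseteq> SSYT [L0, L1, L2, L3] 4"
      using gt_tableau_SSYT assms(1-3) by blast
    show "gt_of_tableau L0 L1 L2 ` SSYT [L0, L1, L2, L3] 4 \<subseteq> gt_patterns L0 L1 L2 L3"
      using gt_of_tableau_mem assms(1-3) by blast
  qed
  have "schur [L0, L1, L2, L3] z = (\<Sum>T\<in>SSYT [L0, L1, L2, L3] 4. \<Prod>c\<in>cells [L0, L1, L2, L3]. z ! T c)"
    using assms by (simp add: schur_def)
  also have "\<dots> = (\<Sum>P\<in>gt_patterns L0 L1 L2 L3. \<Prod>c\<in>cells [L0, L1, L2, L3]. z ! gt_tableau L0 L1 L2 L3 P c)"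
    by (rule sum.reindex_bij_betw[OF bij, symmetric])
  also have "\<dots> = (\<Sum>P\<in>gt_patterns L0 L1 L2 L3. gt_monomial L0 L1 L2 L3 P z)"
    by (rule sum.cong) (auto simp: gt_tableau_monomial)
  finally show ?thesis .
qed

subsection \<open>Bender--Knuth involutions\<close>

text \<open>\<open>weight k P\<close> is the number of entries \<open>k\<close> of the tableau of \<open>P\<close>; \<open>weight3\<close> takes the size
  \<open>N\<close> of the shape as a parameter.\<close>
definition weight0 :: "gt_pattern \<Rightarrow> int" where
  "weight0 P = (case P of (p, q0, q1, r0, r1, r2) \<Rightarrow> int p)"
definition weight1 :: "gt_pattern \<Rightarrow> int" where
  "weight1 P = (case P of (p, q0, q1, r0, r1, r2) \<Rightarrow> int q0 + int q1 - int p)"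
definition weight2 :: "gt_pattern \<Rightarrow> int" where
  "weight2 P = (case P of (p, q0, q1, r0, r1, r2) \<Rightarrow> int r0 + int r1 + int r2 - int q0 - int q1)"
definition weight3 :: "int \<Rightarrow> gt_pattern \<Rightarrow> int" where
  "weight3 N P = (case P of (p, q0, q1, r0, r1, r2) \<Rightarrow> N - int r0 - int r1 - int r2)"

lemma weight_sum: "weight0 P + weight1 P + weight2 P + weight3 N P = N"
  by (cases P) (simp add: weight0_def weight1_def weight2_def weight3_def)

lemma weights_nonneg:
  assumes "P \<in> gt_patterns L0 L1 L2 L3"
  shows "weight0 P \<ge> 0 \<and> weight1 P \<ge> 0 \<and> weight2 P \<ge> 0 \<and> weight3 (int (L0 + L1 + L2 + L3)) P \<ge> 0"
  using assms by (cases P) (auto simp: gt_patterns_def weight0_def weight1_def weight2_def weight3_def)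

text \<open>The Bender--Knuth involution exchanging the entries \<open>k\<close> and \<open>k + 1\<close> reflects the
  entry of row \<open>k\<close> of the pattern inside the interval allowed by its neighbours.\<close>
definition bender_knuth0 :: "gt_pattern \<Rightarrow> gt_pattern" where
  "bender_knuth0 P = (case P of (p, q0, q1, r0, r1, r2) \<Rightarrow> (q0 + q1 - p, q0, q1, r0, r1, r2))"
definition bender_knuth1 :: "gt_pattern \<Rightarrow> gt_pattern" where
  "bender_knuth1 P = (case P of (p, q0, q1, r0, r1, r2) \<Rightarrow>
     (p, max r1 p + r0 - q0, r2 + min r1 p - q1, r0, r1, r2))"
definition bender_knuth2 :: "nat \<Rightarrow> nat \<Rightarrow> nat \<Rightarrow> nat \<Rightarrow> gt_pattern \<Rightarrow> gt_pattern" where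
  "bender_knuth2 L0 L1 L2 L3 P = (case P of (p, q0, q1, r0, r1, r2) \<Rightarrow>
     (p, q0, q1, max L1 q0 + L0 - r0, max L2 q1 + min L1 q0 - r1, L3 + min L2 q1 - r2))"

lemma bender_knuth0:
  "P \<in> gt_patterns L0 L1 L2 L3 \<Longrightarrow> bender_knuth0 P \<in> gt_patterns L0 L1 L2 L3
   \<and> bender_knuth0 (bender_knuth0 P) = P
   \<and> weight0 (bender_knuth0 P) = weight1 P \<and> weight1 (bender_knuth0 P) = weight0 P
   \<and> weight2 (bender_knuth0 P) = weight2 P \<and> weight3 N (bender_knuth0 P) = weight3 N P"
  by (cases P) (auto simp: gt_patterns_def bender_knuth0_def weight0_def weight1_def weight2_def weight3_def)

lemma bender_knuth1:
  "P \<in> gt_patterns L0 L1 L2 L3 \<Longrightarrow> bender_knuth1 P \<in> gt_patterns L0 L1 L2 L3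
   \<and> bender_knuth1 (bender_knuth1 P) = P
   \<and> weight0 (bender_knuth1 P) = weight0 P \<and> weight1 (bender_knuth1 P) = weight2 P
   \<and> weight2 (bender_knuth1 P) = weight1 P \<and> weight3 N (bender_knuth1 P) = weight3 N P"
  by (cases P)
    (auto simp: gt_patterns_def bender_knuth1_def weight0_def weight1_def weight2_def weight3_def max_def min_def)

lemma bender_knuth2:
  fixes L0 L1 L2 L3 :: nat
  defines "N \<equiv> int (L0 + L1 + L2 + L3)"
  shows "P \<in> gt_patterns L0 L1 L2 L3 \<Longrightarrow> bender_knuth2 L0 L1 L2 L3 P \<in> gt_patterns L0 L1 L2 L3
   \<and> bender_knuth2 L0 L1 L2 L3 (bender_knuth2 L0 L1 L2 L3 P) = P
   \<and> weight0 (bender_knuth2 L0 L1 L2 L3 P) = weight0 P \<and> weight1 (bender_knuth2 L0 L1 L2 L3 P) = weight1 P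
   \<and> weight2 (bender_knuth2 L0 L1 L2 L3 P) = weight3 N P \<and> weight3 N (bender_knuth2 L0 L1 L2 L3 P) = weight2 P"
  unfolding N_def by (cases P)
    (auto simp: gt_patterns_def bender_knuth2_def weight0_def weight1_def weight2_def weight3_def max_def min_def)

lemma bender_knuth0_bender_knuth2_commute:
  "bender_knuth0 (bender_knuth2 L0 L1 L2 L3 P) = bender_knuth2 L0 L1 L2 L3 (bender_knuth0 P)"
  by (cases P) (simp add: bender_knuth0_def bender_knuth2_def)

lemma card_eq_by_involution:
  assumes inv: "\<And>x. x \<in> A \<Longrightarrow> f x \<in> A \<and> f (f x) = x"
    and PQ: "\<And>x. x \<in> A \<Longrightarrow> P x \<longleftrightarrow> Q (f x)"
  shows "card {x\<in>A. P x} = card {x\<in>A. Q x}"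
proof (rule bij_betw_same_card[of f], rule bij_betw_byWitness[where f' = f])
  show "\<forall>x\<in>{x\<in>A. P x}. f (f x) = x" "\<forall>y\<in>{x\<in>A. Q x}. f (f y) = y"
    using inv by auto
  show "f ` {x\<in>A. P x} \<subseteq> {x\<in>A. Q x}"
    using inv PQ by blast
  show "f ` {x\<in>A. Q x} \<subseteq> {x\<in>A. P x}"
  proof clarify
    fix y assume "y \<in> A" "Q y"
    then show "f y \<in> A \<and> P (f y)"
      using inv[of y] PQ[of "f y"] by simp
  qed
qed

definition gt_count :: "nat \<Rightarrow> nat \<Rightarrow> nat \<Rightarrow> nat \<Rightarrow> int \<Rightarrow> int \<Rightarrow> nat" where
  "gt_count L0 L1 L2 L3 a c =
     card {P\<in>gt_patterns L0 L1 L2 L3. weight0 P + weight1 P = a \<and> weight0 P + weight2 P = c}"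

text \<open>\<open>gt_count a c\<close> is the coefficient of \<open>x1^a x2^(N-a) y1^c y2^(N-c)\<close> in
  \<open>s_L(x1y1, x1y2, x2y1, x2y2)\<close>; the composites of Bender--Knuth involutions below realise the
  exchanges \<open>x1 \<leftrightarrow> x2\<close> and \<open>y1 \<leftrightarrow> y2\<close>.\<close>
lemma gt_count_sym1:
  "gt_count L0 L1 L2 L3 a c = gt_count L0 L1 L2 L3 (int (L0 + L1 + L2 + L3) - a) c"
proof -
  let ?N = "int (L0 + L1 + L2 + L3)" and ?G = "gt_patterns L0 L1 L2 L3"
  let ?b2 = "bender_knuth2 L0 L1 L2 L3"
  define F where "F = bender_knuth1 \<circ> ?b2 \<circ> bender_knuth0 \<circ> bender_knuth1"
  have F: "F P \<in> ?G \<and> F (F P) = P \<and> weight0 (F P) = weight2 P \<and> weight1 (F P) = weight3 ?N P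
      \<and> weight2 (F P) = weight0 P" if "P \<in> ?G" for P
  proof -
    note h1 = bender_knuth1[OF that, of ?N]
    note h2 = bender_knuth0[OF h1[THEN conjunct1], of ?N]
    note h3 = bender_knuth2[OF h2[THEN conjunct1]]
    note h4 = bender_knuth1[OF h3[THEN conjunct1], of ?N]
    have "F (F P) = bender_knuth1 (?b2 (bender_knuth0 (?b2 (bender_knuth0 (bender_knuth1 P)))))"
      using h4 by (simp add: F_def)
    also have "\<dots> = bender_knuth1 (?b2 (?b2 (bender_knuth0 (bender_knuth0 (bender_knuth1 P)))))"
      by (simp add: bender_knuth0_bender_knuth2_commute)
    also have "\<dots> = P"
      using h1 h2 bender_knuth2[OF h1[THEN conjunct1]] by simp
    finally show ?thesis
      using h1 h2 h3 h4 by (simp add: F_def)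
  qed
  show ?thesis
    unfolding gt_count_def
  proof (rule card_eq_by_involution[of _ F])
    fix P assume "P \<in> ?G"
    with F[OF this] weight_sum[of P ?N]
    show "F P \<in> ?G \<and> F (F P) = P"
      and "weight0 P + weight1 P = a \<and> weight0 P + weight2 P = c \<longleftrightarrow>
           weight0 (F P) + weight1 (F P) = ?N - a \<and> weight0 (F P) + weight2 (F P) = c"
      by auto
  qed
qed

lemma gt_count_sym2:
  "gt_count L0 L1 L2 L3 a c = gt_count L0 L1 L2 L3 a (int (L0 + L1 + L2 + L3) - c)"
proof -
  let ?N = "int (L0 + L1 + L2 + L3)" and ?G = "gt_patterns L0 L1 L2 L3"
  define F where "F = bender_knuth0 \<circ> bender_knuth2 L0 L1 L2 L3"
  have F: "F P \<in> ?G \<and> F (F P) = P \<and> weight0 (F P) = weight1 P \<and> weight1 (F P) = weight0 P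
      \<and> weight2 (F P) = weight3 ?N P" if "P \<in> ?G" for P
    using bender_knuth2[OF that] bender_knuth0[OF bender_knuth2[OF that, THEN conjunct1], of ?N]
      bender_knuth0[OF that, of ?N]
    by (simp add: F_def bender_knuth0_bender_knuth2_commute)
  show ?thesis
    unfolding gt_count_def
  proof (rule card_eq_by_involution[of _ F])
    fix P assume "P \<in> ?G"
    with F[OF this] weight_sum[of P ?N]
    show "F P \<in> ?G \<and> F (F P) = P"
      and "weight0 P + weight1 P = a \<and> weight0 P + weight2 P = c \<longleftrightarrow>
           weight0 (F P) + weight1 (F P) = a \<and> weight0 (F P) + weight2 (F P) = ?N - c"
      by auto
  qed
qed

lemma gt_count_eq_0:
  assumes "a > int (L0 + L1 + L2 + L3) \<or> c > int (L0 + L1 + L2 + L3)"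
  shows "gt_count L0 L1 L2 L3 a c = 0"
proof -
  have "{P\<in>gt_patterns L0 L1 L2 L3. weight0 P + weight1 P = a \<and> weight0 P + weight2 P = c} = {}"
    using assms weights_nonneg weight_sum by (smt (verit, best) Collect_empty_eq)
  then show ?thesis
    unfolding gt_count_def by (simp only: card.empty)
qed

subsection \<open>The Kronecker coefficients of a four-row shape\<close>

definition x_degree :: "gt_pattern \<Rightarrow> nat" where
  "x_degree P = nat (weight0 P + weight1 P)"

definition y_degree :: "gt_pattern \<Rightarrow> nat" where
  "y_degree P = nat (weight0 P + weight2 P)"

lemma gt_monomial_tensor:
  assumes "P \<in> gt_patterns L0 L1 L2 L3"
  defines "N \<equiv> L0 + L1 + L2 + L3"
  shows "gt_monomial L0 L1 L2 L3 P [x1*y1, x1*y2, x2*y1, x2*y2]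
       = x1 ^ x_degree P * x2 ^ (N - x_degree P) * y1 ^ y_degree P * y2 ^ (N - y_degree P)"
proof -
  obtain p q0 q1 r0 r1 r2 where P: "P = (p, q0, q1, r0, r1, r2)"
    by (cases P) auto
  have c: "L1 \<le> r0" "r0 \<le> L0" "L2 \<le> r1" "r1 \<le> L1" "L3 \<le> r2" "r2 \<le> L2"
      "r1 \<le> q0" "q0 \<le> r0" "r2 \<le> q1" "q1 \<le> r1" "q1 \<le> p" "p \<le> q0"
    using assms(1) by (auto simp: gt_patterns_def P)
  define e0 e1 e2 e3 where "e0 = p" "e1 = q0 - p + q1" "e2 = r0 - q0 + r1 - q1 + r2"
    "e3 = L0 - r0 + L1 - r1 + L2 - r2 + L3"
  have "gt_monomial L0 L1 L2 L3 P [x1*y1, x1*y2, x2*y1, x2*y2]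
      = (x1*y1) ^ e0 * (x1*y2) ^ e1 * (x2*y1) ^ e2 * (x2*y2) ^ e3"
    by (simp add: gt_monomial_def P e0_e1_e2_e3_def)
  also have "\<dots> = x1 ^ (e0 + e1) * x2 ^ (e2 + e3) * y1 ^ (e0 + e2) * y2 ^ (e1 + e3)"
    unfolding power_mult_distrib power_add by (simp only: ac_simps)
  moreover have "e0 + e1 = x_degree P" "e2 + e3 = N - x_degree P"
    "e0 + e2 = y_degree P" "e1 + e3 = N - y_degree P"
    using c by (simp_all add: x_degree_def y_degree_def P weight0_def weight1_def weight2_def
        e0_e1_e2_e3_def N_def)
  ultimately show ?thesis
    by simp
qed

lemma sum_by_fibres:
  fixes F :: "nat \<Rightarrow> nat \<Rightarrow> real"
  assumes "finite S" and "\<And>P. P \<in> S \<Longrightarrow> f P \<le> N \<and> g P \<le> N"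
  shows "(\<Sum>P\<in>S. F (f P) (g P)) = (\<Sum>a\<le>N. \<Sum>c\<le>N. real (card {P\<in>S. f P = a \<and> g P = c}) * F a c)"
proof -
  have "(\<Sum>P\<in>S. F (f P) (g P)) = (\<Sum>y\<in>{..N} \<times> {..N}. \<Sum>P\<in>{P\<in>S. (f P, g P) = y}. F (f P) (g P))"
    by (rule sum.group[symmetric]) (use assms in auto)
  also have "\<dots> = (\<Sum>(a, c)\<in>{..N} \<times> {..N}. real (card {P\<in>S. f P = a \<and> g P = c}) * F a c)"
  proof (rule sum.cong[OF refl], clarify)
    fix a c
    have "(\<Sum>P\<in>{P\<in>S. (f P, g P) = (a, c)}. F (f P) (g P)) = (\<Sum>P\<in>{P\<in>S. f P = a \<and> g P = c}. F a c)"
      by (rule sum.cong) auto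
    then show "(\<Sum>P\<in>{P\<in>S. (f P, g P) = (a, c)}. F (f P) (g P))
        = real (card {P\<in>S. f P = a \<and> g P = c}) * F a c"
      by simp
  qed
  also have "\<dots> = (\<Sum>a\<le>N. \<Sum>c\<le>N. real (card {P\<in>S. f P = a \<and> g P = c}) * F a c)"
    by (simp add: sum.cartesian_product)
  finally show ?thesis .
qed

lemma schur_four_rows_tensor:
  assumes "L3 \<le> L2" "L2 \<le> L1" "L1 \<le> L0"
  defines "N \<equiv> L0 + L1 + L2 + L3"
  shows "schur [L0, L1, L2, L3] [x1*y1, x1*y2, x2*y1, x2*y2]
       = (\<Sum>a\<le>N. \<Sum>c\<le>N. real (gt_count L0 L1 L2 L3 (int a) (int c))
            * (x1 ^ a * x2 ^ (N - a)) * (y1 ^ c * y2 ^ (N - c)))"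
proof -
  let ?G = "gt_patterns L0 L1 L2 L3"
  have degrees: "x_degree P \<le> N \<and> y_degree P \<le> N" if "P \<in> ?G" for P
    using weights_nonneg[OF that] weight_sum[of P "int N"] by (simp add: x_degree_def y_degree_def N_def nat_le_iff)
  have count: "card {P\<in>?G. x_degree P = a \<and> y_degree P = c} = gt_count L0 L1 L2 L3 (int a) (int c)" for a c
  proof -
    have "{P\<in>?G. x_degree P = a \<and> y_degree P = c}
        = {P\<in>?G. weight0 P + weight1 P = int a \<and> weight0 P + weight2 P = int c}"
      using weights_nonneg by (auto simp: x_degree_def y_degree_def)
    then show ?thesis
      by (simp add: gt_count_def)
  qed
  have "schur [L0, L1, L2, L3] [x1*y1, x1*y2, x2*y1, x2*y2]
      = (\<Sum>P\<in>?G. gt_monomial L0 L1 L2 L3 P [x1*y1, x1*y2, x2*y1, x2*y2])"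
    using assms by (simp add: schur_four_rows)
  also have "\<dots> = (\<Sum>P\<in>?G. (\<lambda>a c. (x1 ^ a * x2 ^ (N - a)) * (y1 ^ c * y2 ^ (N - c))) (x_degree P) (y_degree P))"
    by (rule sum.cong) (auto simp: gt_monomial_tensor N_def ac_simps)
  also have "\<dots> = (\<Sum>a\<le>N. \<Sum>c\<le>N. real (gt_count L0 L1 L2 L3 (int a) (int c))
      * (x1 ^ a * x2 ^ (N - a)) * (y1 ^ c * y2 ^ (N - c)))"
    by (subst sum_by_fibres[OF finite_gt_patterns degrees]) (simp_all add: count mult.assoc)
  finally show ?thesis .
qed

text \<open>The coefficient of \<open>s_[a, N-a] \<otimes> s_[c, N-c]\<close>, see \<open>schur_four_rows_kron_expansion\<close>.\<close>
definition gt_count_diff :: "nat \<Rightarrow> nat \<Rightarrow> nat \<Rightarrow> nat \<Rightarrow> nat \<Rightarrow> nat \<Rightarrow> int" where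
  "gt_count_diff L0 L1 L2 L3 a c =
     int (gt_count L0 L1 L2 L3 (int a) (int c)) - int (gt_count L0 L1 L2 L3 (int (Suc a)) (int c))
     - int (gt_count L0 L1 L2 L3 (int a) (int (Suc c)))
     + int (gt_count L0 L1 L2 L3 (int (Suc a)) (int (Suc c)))"

lemma schur_four_rows_kron_expansion:
  assumes "L3 \<le> L2" "L2 \<le> L1" "L1 \<le> L0"
  defines "N \<equiv> L0 + L1 + L2 + L3"
  shows "schur [L0, L1, L2, L3] [x1*y1, x1*y2, x2*y1, x2*y2]
       = (\<Sum>a\<in>first_parts N. \<Sum>c\<in>first_parts N.
            of_int (gt_count_diff L0 L1 L2 L3 a c) * schur2 N a x1 x2 * schur2 N c y1 y2)"
proof -
  define K where "K a c = real (gt_count L0 L1 L2 L3 (int a) (int c))" for a c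
  define D where "D a c = K a c - K (Suc a) c" for a c
  have K_sym1: "K a c = K (N - a) c" if "a \<le> N" for a c
    using gt_count_sym1[of L0 L1 L2 L3 "int a" "int c"] that by (simp add: K_def N_def of_nat_diff)
  have K_sym2: "K a c = K a (N - c)" if "c \<le> N" for a c
    using gt_count_sym2[of L0 L1 L2 L3 "int a" "int c"] that by (simp add: K_def N_def of_nat_diff)
  have K_vanish: "K (Suc N) c = 0" "K a (Suc N) = 0" for a c
    by (simp_all add: K_def N_def gt_count_eq_0)
  have inner: "(\<Sum>a\<le>N. K a c * (x1 ^ a * x2 ^ (N - a)))
      = (\<Sum>a\<in>first_parts N. D a c * schur2 N a x1 x2)" for c
    unfolding D_def schur2_def by (rule sum_palindromic_telescope) (fact K_sym1, fact K_vanish)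
  have outer: "(\<Sum>c\<le>N. D a c * (y1 ^ c * y2 ^ (N - c)))
      = (\<Sum>c\<in>first_parts N. (D a c - D a (Suc c)) * schur2 N c y1 y2)" for a
    unfolding schur2_def
  proof (rule sum_palindromic_telescope)
    fix i
    assume "i \<le> N"
    then have "K a i = K a (N - i)" "K (Suc a) i = K (Suc a) (N - i)"
      by (simp_all add: K_sym2[OF \<open>i \<le> N\<close>])
    then show "D a i = D a (N - i)"
      unfolding D_def by linarith
  qed (simp add: D_def K_vanish)
  have "schur [L0, L1, L2, L3] [x1*y1, x1*y2, x2*y1, x2*y2]
      = (\<Sum>c\<le>N. (y1 ^ c * y2 ^ (N - c)) * (\<Sum>a\<le>N. K a c * (x1 ^ a * x2 ^ (N - a))))"
    unfolding schur_four_rows_tensor[OF assms(1-3)] N_def[symmetric] K_def[symmetric]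
    by (subst sum.swap) (simp add: sum_distrib_left ac_simps)
  also have "\<dots> = (\<Sum>a\<in>first_parts N. schur2 N a x1 x2 * (\<Sum>c\<le>N. D a c * (y1 ^ c * y2 ^ (N - c))))"
    unfolding inner by (simp add: sum_distrib_left sum_distrib_right ac_simps) (rule sum.swap)
  also have "\<dots> = (\<Sum>a\<in>first_parts N. \<Sum>c\<in>first_parts N.
      of_int (gt_count_diff L0 L1 L2 L3 a c) * schur2 N a x1 x2 * schur2 N c y1 y2)"
    unfolding outer by (simp add: sum_distrib_left gt_count_diff_def D_def K_def algebra_simps)
  finally show ?thesis .
qed

lemma kron_four_rows:
  assumes "L3 \<le> L2" "L2 \<le> L1" "L1 \<le> L0"
  defines "N \<equiv> L0 + L1 + L2 + L3"
  shows "kron A B [L0, L1, L2, L3]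
       = (if (A, B) \<in> parts2 N \<times> parts2 N then gt_count_diff L0 L1 L2 L3 (A ! 0) (B ! 0) else 0)"
proof -
  define g where "g A B = (if (A, B) \<in> parts2 N \<times> parts2 N then gt_count_diff L0 L1 L2 L3 (A ! 0) (B ! 0) else 0)"
    for A B
  have N: "sum_list [L0, L1, L2, L3] = N"
    by (simp add: N_def)
  have "kron_expansion [L0, L1, L2, L3] g"
    unfolding kron_expansion_def N
  proof (intro conjI allI impI)
    fix x1 x2 y1 y2 :: real
    have "schur [L0, L1, L2, L3] [x1*y1, x1*y2, x2*y1, x2*y2]
        = (\<Sum>a\<in>first_parts N. \<Sum>c\<in>first_parts N.
             of_int (g [a, N - a] [c, N - c]) * schur2 N a x1 x2 * schur2 N c y1 y2)"
      unfolding schur_four_rows_kron_expansion[OF assms(1-3)] N_def[symmetric]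
      by (intro sum.cong refl) (auto simp: g_def parts2_eq_image)
    then show "schur [L0, L1, L2, L3] [x1*y1, x1*y2, x2*y1, x2*y2]
        = (\<Sum>(a, b)\<in>parts2 N \<times> parts2 N. of_int (g a b) * schur a [x1, x2] * schur b [y1, y2])"
      by (simp add: sum_parts2_schur_products)
  qed (auto simp: g_def)
  then have "(THE g. kron_expansion [L0, L1, L2, L3] g) = g"
    using kron_expansion_unique by blast
  then show ?thesis
    by (simp add: kron_eq_The g_def)
qed

text \<open>The only pattern of weight \<open>(U + S, U + T)\<close> is \<open>(U, U, S, U, T, S)\<close>; the other three terms of
  the second difference vanish.\<close>
lemma gt_count_diff_extreme:
  assumes "S \<le> T" "T \<le> U"
  shows "gt_count_diff U T S S (U + S) (U + T) = 1"
proof -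
  have "{P\<in>gt_patterns U T S S. weight0 P + weight1 P = int (U + S) \<and> weight0 P + weight2 P = int (U + T)}
      = {(U, U, S, U, T, S)}"
    using assms by (auto simp: gt_patterns_def weight0_def weight1_def weight2_def)
  then have "gt_count U T S S (int (U + S)) (int (U + T)) = 1"
    unfolding gt_count_def by simp
  moreover have "{P\<in>gt_patterns U T S S.
      weight0 P + weight1 P = int (Suc (U + S)) \<and> weight0 P + weight2 P = int (U + T)} = {}"
    using assms by (auto simp: gt_patterns_def weight0_def weight1_def weight2_def)
  then have "gt_count U T S S (int (Suc (U + S))) (int (U + T)) = 0"
    unfolding gt_count_def by (simp only: card.empty)
  moreover have "{P\<in>gt_patterns U T S S.
      weight0 P + weight1 P = a \<and> weight0 P + weight2 P = int (Suc (U + T))} = {}" for a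
    using assms by (auto simp: gt_patterns_def weight0_def weight1_def weight2_def)
  then have "gt_count U T S S a (int (Suc (U + T))) = 0" for a
    unfolding gt_count_def by (simp only: card.empty)
  ultimately show ?thesis
    by (simp add: gt_count_diff_def del: of_nat_add of_nat_Suc)
qed

lemma pS_0_0: "pS 0 0 = 1"
proof -
  have "{(x1, x2, x3, x4). int x1 + int x3 + int x4 = 0 \<and> int x2 + int x3 + 2 * int x4 = 0}
      = {(0 :: nat, 0 :: nat, 0 :: nat, 0 :: nat)}"
    by auto
  then show ?thesis
    by (simp add: pS_def)
qed

theorem proposition3p9:
  fixes u t s k :: nat
  assumes "s \<le> t" and "t \<le> u" and "1 \<le> k"
  shows "kron (scale k [u + s, t + s]) (scale k [u + t, 2 * s]) (scale k [u, t, s, s]) = 1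
       \<and> atomic_kron (scale k [u + s, t + s]) (scale k [u + t, 2 * s]) (scale k [u, t, s, s]) = 1"
proof -
  define U T S where "U = k * u" "T = k * t" "S = k * s"
  have shape: "S \<le> T" "T \<le> U"
    using assms by (simp_all add: U_T_S_def)
  have scaled: "scale k [u, t, s, s] = [U, T, S, S]" "scale k [u + s, t + s] = [U + S, T + S]"
    "scale k [u + t, 2 * s] = [U + T, S + S]"
    by (simp_all add: scale_def U_T_S_def algebra_simps)
  have "[U + S, T + S] \<in> parts2 (U + T + S + S)" "[U + T, S + S] \<in> parts2 (U + T + S + S)"
    using shape by (auto simp: parts2_def)
  then have "kron [U + S, T + S] [U + T, S + S] [U, T, S, S] = 1"
    using shape by (simp add: kron_four_rows gt_count_diff_extreme)
  moreover have "atomic_kron [U + S, T + S] [U + T, S + S] [U, T, S, S] = 1"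
    by (simp add: atomic_kron_def pS_0_0)
  ultimately show ?thesis
    by (simp add: scaled)
qed

end
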